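(* Let $\psi_\alpha$ be either a Value-at-Risk metric $\mathrm{VaR}_\alpha$ or a distortion risk measure. Let $[Z_i(\tau_i,u_i)]_{i=1}^N$ be per-agent return distributions with quantile functions $\theta_i(\tau_i,u_i,w)$, let $\bar u_i=\arg\max_{u_i}\psi_\alpha[Z_i(\tau_i,u_i)]$ and $\bar{\boldsymbol u}=(\bar u_1,\dots,\bar u_N)$, let $k_1,\dots,k_N\ge0$ be constants not depending on $\boldsymbol u$, let $\theta_r(\boldsymbol\tau,\boldsymbol u,w)\le0$ for all $\boldsymbol u,w$, and let the mask be $m_\alpha(\boldsymbol\tau,\boldsymbol u)=0$ if $\boldsymbol u=\bar{\boldsymbol u}$ and $m_\alpha(\boldsymbol\tau,\boldsymbol u)=1$ otherwise. Let $Z_{jt}(\boldsymbol\tau,\boldsymbol u)$ be a joint return distribution (e.g. represented as a Dirac mixture $\sum_{j=1}^J p_j(\boldsymbol\tau,\boldsymbol u)\delta_{\theta(\boldsymbol\tau,\boldsymbol u,w_j)}$) whose quantile function is $$\theta(\boldsymbol\tau,\boldsymbol u,w)=\sum_{i=1}^N k_i\,\theta_i(\tau_i,u_i,w)+m_\alpha(\boldsymbol\tau,\boldsymbol u)\,\theta_r(\boldsymbol\tau,\boldsymbol u,w),\qquad w\in(0,1].$$ Then $[Z_i]_{i=1}^N$ satisfy the RIGM principle for $Z_{jt}$ with risk metric $\psi_\alpha$, i.e. $\arg\max_{\boldsymbol u}\psi_\alpha[Z_{jt}(\boldsymbol\tau,\boldsymbol u)]=\bar{\boldsymbol u}$.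
   Context: There are $N$ agents; agent $i$ has observation history $\tau_i$ and finite action set $U_i$; $\boldsymbol\tau=(\tau_1,\dots,\tau_N)$, $\boldsymbol u=(u_1,\dots,u_N)$. For a real random variable $Z$ with CDF $F_Z$, its quantile function is $\theta_Z(\omega)=\inf\{z\in\mathbb{R}:\omega\le F_Z(z)\}$, $\omega\in(0,1]$. $\mathrm{VaR}_\alpha(Z)=\theta_Z(\alpha)$. A distortion risk measure with differentiable distortion function $g:[0,1]\to[0,1]$ is $\psi(Z)=\int_0^1 g'(\omega)\theta_Z(\omega)\,d\omega$ (integrals assumed finite; examples CVaR, Wang, CPW). RIGM principle: $\arg\max_{\boldsymbol u}\psi_\alpha[Z_{jt}(\boldsymbol\tau,\boldsymbol u)]=(\arg\max_{u_1}\psi_\alpha[Z_1(\tau_1,u_1)],\dots,\arg\max_{u_N}\psi_\alpha[Z_N(\tau_N,u_N)])$. Standing assumption of the paper: argmax sets are singletons (ties broken by smallest index). *)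

theory Defs
  imports "HOL-Probability.Probability"
begin

definition quantile :: "real measure \<Rightarrow> real \<Rightarrow> real" where
  "quantile M \<omega> = Inf {z. \<omega> \<le> measure M {..z}}"

definition real_distribution' :: "real measure \<Rightarrow> bool" where
  "real_distribution' M \<longleftrightarrow> prob_space M \<and> sets M = sets borel"

definition VaR :: "real \<Rightarrow> real measure \<Rightarrow> real" where
  "VaR \<alpha> M = quantile M \<alpha>"

definition distortion_function :: "(real \<Rightarrow> real) \<Rightarrow> (real \<Rightarrow> real) \<Rightarrow> bool" where
  "distortion_function g g' \<longleftrightarrow>
     (\<forall>x\<in>{0..1}. (g has_real_derivative g' x) (at x within {0..1})) \<and>
     g ` {0..1} \<subseteq> {0..1} \<and> mono_on {0..1} g \<and> g 0 = 0 \<and> g 1 = 1"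

definition distortion_rm :: "(real \<Rightarrow> real) \<Rightarrow> real measure \<Rightarrow> real" where
  "distortion_rm g' M = integral {0..1} (\<lambda>\<omega>. g' \<omega> * quantile M \<omega>)"

definition argmax_set :: "('a \<Rightarrow> real) \<Rightarrow> 'a set \<Rightarrow> 'a set" where
  "argmax_set f A = {x \<in> A. \<forall>y\<in>A. f y \<le> f x}"

end

theory Submission
  imports Defs
begin

text \<open>Both risk metrics act on a distribution through its quantile function, linearly and
  monotonically: VaR evaluates it at \<open>\<alpha>\<close>, a distortion risk measure integrates it against
  \<open>g' \<ge> 0\<close>. Hence \<open>\<psi>(Z\<^sub>j\<^sub>t(u))\<close> splits into \<open>\<Sum>\<^sub>i k\<^sub>i \<psi>(Z\<^sub>i(u\<^sub>i))\<close>, which each \<open>u\<^sub>i = ub\<^sub>i\<close>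
  maximises because \<open>k\<^sub>i \<ge> 0\<close>, plus the masked term \<open>m(u) \<psi>(\<theta>\<^sub>r)\<close>, which is \<open>\<le> 0\<close> and
  vanishes at \<open>ub\<close>. So \<open>ub\<close> is a joint maximiser, and the joint argmax being a singleton
  it is the only one.\<close>

lemma mono_on_derivative_nonneg:
  fixes f :: "real \<Rightarrow> real"
  assumes mono: "mono_on {a..b} f"
    and deriv: "(f has_real_derivative D) (at x within {a..b})"
    and x: "a \<le> x" "x < b"
  shows "0 \<le> D"
proof (rule ccontr)
  assume "\<not> 0 \<le> D"
  then obtain d where "d > 0" and decreasing:
      "\<forall>h>0. x + h \<in> {a..b} \<longrightarrow> h < d \<longrightarrow> f (x + h) < f x"
    using has_real_derivative_neg_dec_right[OF deriv] by auto
  define h where "h = min d (b - x) / 2"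
  have h: "h > 0" "h < d" "h < b - x"
    using \<open>d > 0\<close> x by (auto simp: h_def min_def)
  then have "x + h \<in> {a..b}"
    using x by simp
  with h have "f (x + h) < f x"
    using decreasing by blast
  moreover have "f x \<le> f (x + h)"
    using h \<open>x + h \<in> {a..b}\<close> x by (intro mono_onD[OF mono]) auto
  ultimately show False
    by simp
qed

lemma distortion_function_derivative_nonneg:
  assumes "distortion_function g g'" and "x \<in> {0..<1}"
  shows "0 \<le> g' x"
proof (rule mono_on_derivative_nonneg)
  show "mono_on {0..1} g" "(g has_real_derivative g' x) (at x within {0..1})"
    using assms by (auto simp: distortion_function_def)
qed (use assms(2) in auto)

lemma distortion_integral_nonpos:
  assumes "distortion_function g g'"
    and integrable: "(\<lambda>\<omega>. g' \<omega> * r \<omega>) integrable_on {0..1}"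
    and nonpos: "\<And>\<omega>. \<omega> \<in> {0<..1} \<Longrightarrow> r \<omega> \<le> 0"
  shows "integral {0..1} (\<lambda>\<omega>. g' \<omega> * r \<omega>) \<le> 0"
proof -
  have "integral {0<..<1} (\<lambda>\<omega>. g' \<omega> * r \<omega>) \<le> integral {0<..<1::real} (\<lambda>_. 0)"
    using integrable nonpos distortion_function_derivative_nonneg[OF assms(1)]
    by (intro integral_le) (auto simp: integrable_on_open_interval_real mult_nonneg_nonpos)
  then show ?thesis
    by (simp add: integral_open_interval_real)
qed

lemma distortion_rm_quantile_combination:
  assumes "finite I"
    and quantile_eq: "\<And>\<omega>. \<omega> \<in> {0<..1} \<Longrightarrow>
      quantile M \<omega> = (\<Sum>i\<in>I. k i * quantile (Ms i) \<omega>) + c * r \<omega>"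
    and integrable_Ms: "\<And>i. i \<in> I \<Longrightarrow> (\<lambda>\<omega>. g' \<omega> * quantile (Ms i) \<omega>) integrable_on {0..1}"
    and integrable_r: "(\<lambda>\<omega>. g' \<omega> * r \<omega>) integrable_on {0..1}"
  shows "distortion_rm g' M =
    (\<Sum>i\<in>I. k i * distortion_rm g' (Ms i)) + c * integral {0..1} (\<lambda>\<omega>. g' \<omega> * r \<omega>)"
proof -
  have "distortion_rm g' M = integral {0..1}
      (\<lambda>\<omega>. (\<Sum>i\<in>I. k i * (g' \<omega> * quantile (Ms i) \<omega>)) + c * (g' \<omega> * r \<omega>))"
    unfolding distortion_rm_def
    by (rule integral_spike[of "{0}"]) (auto simp: quantile_eq algebra_simps sum_distrib_left)
  also have "\<dots> = integral {0..1} (\<lambda>\<omega>. \<Sum>i\<in>I. k i * (g' \<omega> * quantile (Ms i) \<omega>))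
      + integral {0..1} (\<lambda>\<omega>. c * (g' \<omega> * r \<omega>))"
    using \<open>finite I\<close> integrable_Ms integrable_r
    by (intro integral_add integrable_sum integrable_on_mult_right)
  also have "\<dots> = (\<Sum>i\<in>I. k i * integral {0..1} (\<lambda>\<omega>. g' \<omega> * quantile (Ms i) \<omega>))
      + c * integral {0..1} (\<lambda>\<omega>. g' \<omega> * r \<omega>)"
    using \<open>finite I\<close> integrable_Ms
    by (simp add: integral_sum integrable_on_mult_right)
  finally show ?thesis
    by (simp add: distortion_rm_def)
qed

lemma masked_sum_argmax:
  assumes ub: "ub \<in> Pi\<^sub>E {..<N} U"
    and ub_best: "\<And>i a. i < N \<Longrightarrow> a \<in> U i \<Longrightarrow> f i a \<le> f i (ub i)"
    and k_nonneg: "\<And>i. i < N \<Longrightarrow> 0 \<le> k i"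
    and R_nonpos: "\<And>u. u \<in> Pi\<^sub>E {..<N} U \<Longrightarrow> R u \<le> (0::real)"
    and F_eq: "\<And>u. u \<in> Pi\<^sub>E {..<N} U \<Longrightarrow>
      F u = (\<Sum>i<N. k i * f i (u i)) + (if u = ub then 0 else 1) * R u"
  shows "ub \<in> argmax_set F (Pi\<^sub>E {..<N} U)"
proof -
  have "F u \<le> F ub" if u: "u \<in> Pi\<^sub>E {..<N} U" for u
  proof -
    have "(\<Sum>i<N. k i * f i (u i)) \<le> (\<Sum>i<N. k i * f i (ub i))"
      using u by (intro sum_mono mult_left_mono ub_best k_nonneg) auto
    moreover have "(if u = ub then 0 else 1) * R u \<le> 0"
      using R_nonpos[OF u] by simp
    ultimately show ?thesis
      using F_eq[OF u] F_eq[OF ub] by simp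
  qed
  with ub show ?thesis
    by (simp add: argmax_set_def)
qed

theorem theorem6:
  fixes N :: nat
    and U :: "nat \<Rightarrow> 'a set"
    and Z :: "nat \<Rightarrow> 'a \<Rightarrow> real measure"
    and Zjt :: "(nat \<Rightarrow> 'a) \<Rightarrow> real measure"
    and \<theta>r :: "(nat \<Rightarrow> 'a) \<Rightarrow> real \<Rightarrow> real"
    and k :: "nat \<Rightarrow> real"
    and ub :: "nat \<Rightarrow> 'a"
    and \<psi> :: "real measure \<Rightarrow> real"
  assumes U_fin: "\<forall>i<N. finite (U i) \<and> U i \<noteq> {}"
    and Z_distr: "\<forall>i<N. \<forall>a\<in>U i. real_distribution' (Z i a)"
    and Zjt_distr: "\<forall>u\<in>Pi\<^sub>E {..<N} U. real_distribution' (Zjt u)"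
    and risk: "(\<exists>\<alpha>\<in>{0<..1}. \<psi> = VaR \<alpha>) \<or>
       (\<exists>g g'. distortion_function g g' \<and> \<psi> = distortion_rm g' \<and>
          (\<forall>i<N. \<forall>a\<in>U i. (\<lambda>\<omega>. g' \<omega> * quantile (Z i a) \<omega>) integrable_on {0..1}) \<and>
          (\<forall>u\<in>Pi\<^sub>E {..<N} U. (\<lambda>\<omega>. g' \<omega> * \<theta>r u \<omega>) integrable_on {0..1}) \<and>
          (\<forall>u\<in>Pi\<^sub>E {..<N} U. (\<lambda>\<omega>. g' \<omega> * quantile (Zjt u) \<omega>) integrable_on {0..1}))"
    and ub_joint: "ub \<in> Pi\<^sub>E {..<N} U"
    and ub_argmax: "\<forall>i<N. argmax_set (\<lambda>a. \<psi> (Z i a)) (U i) = {ub i}"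
    and k_nonneg: "\<forall>i<N. k i \<ge> 0"
    and \<theta>r_nonpos: "\<forall>u\<in>Pi\<^sub>E {..<N} U. \<forall>\<omega>\<in>{0<..1}. \<theta>r u \<omega> \<le> 0"
    and Zjt_quantile: "\<forall>u\<in>Pi\<^sub>E {..<N} U. \<forall>\<omega>\<in>{0<..1}.
       quantile (Zjt u) \<omega> =
         (\<Sum>i<N. k i * quantile (Z i (u i)) \<omega>) + (if u = ub then 0 else 1) * \<theta>r u \<omega>"
    and joint_singleton: "\<exists>v. argmax_set (\<lambda>u. \<psi> (Zjt u)) (Pi\<^sub>E {..<N} U) = {v}"
  shows "argmax_set (\<lambda>u. \<psi> (Zjt u)) (Pi\<^sub>E {..<N} U) = {ub}"
proof -
  let ?P = "Pi\<^sub>E {..<N} U"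
  obtain R where R_nonpos: "\<And>u. u \<in> ?P \<Longrightarrow> R u \<le> 0"
    and decomposition: "\<And>u. u \<in> ?P \<Longrightarrow>
      \<psi> (Zjt u) = (\<Sum>i<N. k i * \<psi> (Z i (u i))) + (if u = ub then 0 else 1) * R u"
  proof (cases "\<exists>\<alpha>\<in>{0<..1}. \<psi> = VaR \<alpha>")
    case True
    then obtain \<alpha> where "\<alpha> \<in> {0<..1}" and "\<psi> = VaR \<alpha>"
      by blast
    then show thesis
      using that[of "\<lambda>u. \<theta>r u \<alpha>"] \<theta>r_nonpos Zjt_quantile by (simp add: VaR_def)
  next
    case False
    with risk obtain g g' where g: "distortion_function g g'" and \<psi>: "\<psi> = distortion_rm g'"
      and integrable_Z: "\<forall>i<N. \<forall>a\<in>U i. (\<lambda>\<omega>. g' \<omega> * quantile (Z i a) \<omega>) integrable_on {0..1}"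
      and integrable_\<theta>r: "\<forall>u\<in>?P. (\<lambda>\<omega>. g' \<omega> * \<theta>r u \<omega>) integrable_on {0..1}"
      by blast
    show thesis
    proof (rule that[of "\<lambda>u. integral {0..1} (\<lambda>\<omega>. g' \<omega> * \<theta>r u \<omega>)"])
      fix u assume u: "u \<in> ?P"
      with integrable_\<theta>r \<theta>r_nonpos show "integral {0..1} (\<lambda>\<omega>. g' \<omega> * \<theta>r u \<omega>) \<le> 0"
        by (intro distortion_integral_nonpos[OF g]) auto
      from u integrable_\<theta>r Zjt_quantile integrable_Z
      show "\<psi> (Zjt u) = (\<Sum>i<N. k i * \<psi> (Z i (u i)))
          + (if u = ub then 0 else 1) * integral {0..1} (\<lambda>\<omega>. g' \<omega> * \<theta>r u \<omega>)"
        unfolding \<psi> by (intro distortion_rm_quantile_combination) (auto simp: PiE_iff)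
    qed
  qed
  have "ub \<in> argmax_set (\<lambda>u. \<psi> (Zjt u)) ?P"
    using ub_argmax k_nonneg R_nonpos decomposition
    by (intro masked_sum_argmax[OF ub_joint]) (auto simp: argmax_set_def)
  with joint_singleton show ?thesis
    by auto
qed

end
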